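(* Let $N\ge 1$, let $\mathcal{A}$ be a collection of subsets of $\{1,\dots,N\}$ with $\emptyset\in\mathcal{A}$, which is downward closed (if $A\in\mathcal{A}$ and $B\subseteq A$ then $B\in\mathcal{A}$) and such that every buyer $n$ belongs to some $A\in\mathcal{A}$. Then for every $r>1$, the worst case efficiency loss ratio for binary valued buyers satisfies $$\eta(r,2;\mathcal{A})\le \frac{r-1}{2r-1}\le \frac12 .$$
   Context: Model: buyers $n\in\{1,\dots,N\}$; $\mathcal{A}$ is the collection of feasible sets of winners. Buyer $n$'s type $X_n$ is a discrete random variable taking values $0<x_n^1<\dots<x_n^{K_n}$ with probabilities $p_n^i=\Pr[X_n=x_n^i]>0$; $X_1,\dots,X_N$ are independent. An allocation rule $\pi$ maps each bid vector $v=(v_1,\dots,v_N)$, $v_n\in\{x_n^1,\dots,x_n^{K_n}\}$, to a probability distribution $(\pi_A(v))_{A\in\mathcal{A}}$ on $\mathcal{A}$; set $Q_n(v)=\sum_{A\in\mathcal{A}:n\in A}\pi_A(v)$. Virtual valuation: $w_n(x_n^i)=x_n^i-(x_n^{i+1}-x_n^i)\frac{\sum_{j=i+1}^{K_n}p_n^j}{p_n^i}$ for $i<K_n$, and $w_n(x_n^{K_n})=x_n^{K_n}$. Monotone virtual valuation $\overline{w}_n$: let $(g_n^0,h_n^0)=(0,-x_n^1)$, $(g_n^i,h_n^i)=(\sum_{j\le i}p_n^j,\,-x_n^{i+1}\sum_{j>i}p_n^j)$ for $1\le i\le K_n-1$, $(g_n^{K_n},h_n^{K_n})=(1,0)$;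 let $\overline{h}_n^i$ be the value at $g_n^i$ of the lower convex hull of these points, and $\overline{w}_n(x_n^i)=(\overline{h}_n^i-\overline{h}_n^{i-1})/(g_n^i-g_n^{i-1})$. (For binary types $\{L_n,H_n\}$ with $\Pr[X_n=H_n]=p_n$ this gives $\overline{w}_n(H_n)=H_n$, $\overline{w}_n(L_n)=(L_n-p_nH_n)/(1-p_n)$; for a single-valued type, $\overline{w}_n(x_n^1)=x_n^1$.) An allocation rule is optimal (i.e. it is the allocation rule of a revenue-maximizing Bayesian incentive compatible, individually rational direct mechanism) if for every $v$, $\pi(v)$ is supported on $\arg\max_{A\in\mathcal{A}}\sum_{n\in A}\overline{w}_n(v_n)$, with consistent tie-breaking: if $v_n<v_n'$ and $\overline{w}_n(v_n)=\overline{w}_n(v_n')$ then $Q_n(v_n,v_{-n})\le Q_n(v_n',v_{-n})$ for all $v_{-n}$. Let $\tilde\pi^o$ be an optimal allocation rule maximizing the realized welfare $\mathbb{E}[\sum_n Q_n(X)X_n]$ among all optimal allocation rules. $\mathrm{MSW}=\mathbb{E}[\max_{A\in\mathcal{A}}\sum_{n\in A}X_n]$, and $\mathrm{ELR}(\pi)=(\mathrm{MSW}-\mathbb{E}[\sum_nQ_n(X)X_n])/\mathrm{MSW}$. $\mathcal{D}_{r,K}$ is the set of all such type distributions with $K_n\le K$ for all $n$, $x_n^1>0$, $p_n^i>0$, and $(\max_n x_n^{K_n})/(\min_n x_n^1)\le r$. The worst case ELR is $\eta(r,K;\mathcal{A})=\sup_{\mathcal{D}_{r,K}}\mathrm{ELR}(\tilde\pi^o)$.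 *)

theory Defs
  imports "HOL-Library.FuncSet" Complex_Main
begin

text \<open>
A type distribution is given by
  Kf n  (number of type values of buyer n),
  x n i (the i-th value, i = 1..Kf n, strictly increasing),
  p n i (its probability).
An allocation rule maps bid vectors to a function on sets of buyers
(a probability vector on the feasible collection calA).
\<close>

definition supp :: "(nat \<Rightarrow> nat) \<Rightarrow> (nat \<Rightarrow> nat \<Rightarrow> real) \<Rightarrow> nat \<Rightarrow> real set" where
  "supp Kf x n = x n ` {1..Kf n}"

definition profiles :: "nat \<Rightarrow> (nat \<Rightarrow> nat) \<Rightarrow> (nat \<Rightarrow> nat \<Rightarrow> real) \<Rightarrow> (nat \<Rightarrow> real) set" where
  "profiles N Kf x = PiE {1..N} (\<lambda>n. supp Kf x n)"

definition idx :: "(nat \<Rightarrow> nat) \<Rightarrow> (nat \<Rightarrow> nat \<Rightarrow> real) \<Rightarrow> nat \<Rightarrow> real \<Rightarrow> nat" where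
  "idx Kf x n y = (THE i. i \<in> {1..Kf n} \<and> x n i = y)"

definition pr1 :: "(nat \<Rightarrow> nat) \<Rightarrow> (nat \<Rightarrow> nat \<Rightarrow> real) \<Rightarrow> (nat \<Rightarrow> nat \<Rightarrow> real) \<Rightarrow> nat \<Rightarrow> real \<Rightarrow> real" where
  "pr1 Kf x p n y = p n (idx Kf x n y)"

text \<open>Pr[X = v], by independence\<close>
definition prob_prof :: "nat \<Rightarrow> (nat \<Rightarrow> nat) \<Rightarrow> (nat \<Rightarrow> nat \<Rightarrow> real) \<Rightarrow> (nat \<Rightarrow> nat \<Rightarrow> real) \<Rightarrow> (nat \<Rightarrow> real) \<Rightarrow> real" where
  "prob_prof N Kf x p v = (\<Prod>n\<in>{1..N}. pr1 Kf x p n (v n))"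

definition valid_dist :: "nat \<Rightarrow> real \<Rightarrow> nat \<Rightarrow> (nat \<Rightarrow> nat) \<Rightarrow> (nat \<Rightarrow> nat \<Rightarrow> real) \<Rightarrow> (nat \<Rightarrow> nat \<Rightarrow> real) \<Rightarrow> bool" where
  "valid_dist N r K Kf x p \<longleftrightarrow>
     (\<forall>n\<in>{1..N}. 1 \<le> Kf n \<and> Kf n \<le> K \<and> 0 < x n 1
        \<and> (\<forall>i j. 1 \<le> i \<longrightarrow> i < j \<longrightarrow> j \<le> Kf n \<longrightarrow> x n i < x n j)
        \<and> (\<forall>i\<in>{1..Kf n}. 0 < p n i)
        \<and> (\<Sum>i=1..Kf n. p n i) = 1)
     \<and> Max ((\<lambda>n. x n (Kf n)) ` {1..N}) / Min ((\<lambda>n. x n 1) ` {1..N}) \<le> r"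

definition gpt :: "(nat \<Rightarrow> nat) \<Rightarrow> (nat \<Rightarrow> nat \<Rightarrow> real) \<Rightarrow> nat \<Rightarrow> nat \<Rightarrow> real" where
  "gpt Kf p n i = (if i = 0 then 0 else if i < Kf n then (\<Sum>j=1..i. p n j) else 1)"

definition hpt :: "(nat \<Rightarrow> nat) \<Rightarrow> (nat \<Rightarrow> nat \<Rightarrow> real) \<Rightarrow> (nat \<Rightarrow> nat \<Rightarrow> real) \<Rightarrow> nat \<Rightarrow> nat \<Rightarrow> real" where
  "hpt Kf x p n i = (if i = 0 then - x n 1
                     else if i < Kf n then - x n (i+1) * (\<Sum>j=i+1..Kf n. p n j) else 0)"

text \<open>Value at g_n^i of the lower convex hull of the points (g_n^j, h_n^j), j = 0..K_n\<close>
definition hbar :: "(nat \<Rightarrow> nat) \<Rightarrow> (nat \<Rightarrow> nat \<Rightarrow> real) \<Rightarrow> (nat \<Rightarrow> nat \<Rightarrow> real) \<Rightarrow> nat \<Rightarrow> nat \<Rightarrow> real" where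
  "hbar Kf x p n i = Inf {(\<Sum>j=0..Kf n. l j * hpt Kf x p n j) | l.
        (\<forall>j. 0 \<le> l j) \<and> (\<Sum>j=0..Kf n. l j) = 1
        \<and> (\<Sum>j=0..Kf n. l j * gpt Kf p n j) = gpt Kf p n i}"

text \<open>Monotone virtual valuation, first on indices, then on values\<close>
definition wbar_idx :: "(nat \<Rightarrow> nat) \<Rightarrow> (nat \<Rightarrow> nat \<Rightarrow> real) \<Rightarrow> (nat \<Rightarrow> nat \<Rightarrow> real) \<Rightarrow> nat \<Rightarrow> nat \<Rightarrow> real" where
  "wbar_idx Kf x p n i = (hbar Kf x p n i - hbar Kf x p n (i-1)) / (gpt Kf p n i - gpt Kf p n (i-1))"

definition wbar :: "(nat \<Rightarrow> nat) \<Rightarrow> (nat \<Rightarrow> nat \<Rightarrow> real) \<Rightarrow> (nat \<Rightarrow> nat \<Rightarrow> real) \<Rightarrow> nat \<Rightarrow> real \<Rightarrow> real" where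
  "wbar Kf x p n y = wbar_idx Kf x p n (idx Kf x n y)"

definition alloc_rule :: "nat \<Rightarrow> nat set set \<Rightarrow> (nat \<Rightarrow> nat) \<Rightarrow> (nat \<Rightarrow> nat \<Rightarrow> real)
     \<Rightarrow> ((nat \<Rightarrow> real) \<Rightarrow> nat set \<Rightarrow> real) \<Rightarrow> bool" where
  "alloc_rule N calA Kf x \<pi> \<longleftrightarrow>
     (\<forall>v\<in>profiles N Kf x. (\<forall>A. 0 \<le> \<pi> v A) \<and> (\<forall>A. A \<notin> calA \<longrightarrow> \<pi> v A = 0)
        \<and> (\<Sum>A\<in>calA. \<pi> v A) = 1)"

definition Qn :: "nat set set \<Rightarrow> ((nat \<Rightarrow> real) \<Rightarrow> nat set \<Rightarrow> real) \<Rightarrow> nat \<Rightarrow> (nat \<Rightarrow> real) \<Rightarrow> real" where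
  "Qn calA \<pi> n v = (\<Sum>A\<in>{A\<in>calA. n \<in> A}. \<pi> v A)"

definition optimal_rule :: "nat \<Rightarrow> nat set set \<Rightarrow> (nat \<Rightarrow> nat) \<Rightarrow> (nat \<Rightarrow> nat \<Rightarrow> real) \<Rightarrow> (nat \<Rightarrow> nat \<Rightarrow> real)
     \<Rightarrow> ((nat \<Rightarrow> real) \<Rightarrow> nat set \<Rightarrow> real) \<Rightarrow> bool" where
  "optimal_rule N calA Kf x p \<pi> \<longleftrightarrow>
     alloc_rule N calA Kf x \<pi> \<and>
     (\<forall>v\<in>profiles N Kf x.
        (\<forall>A\<in>calA. 0 < \<pi> v A \<longrightarrow>
            (\<forall>B\<in>calA. (\<Sum>n\<in>B. wbar Kf x p n (v n)) \<le> (\<Sum>n\<in>A. wbar Kf x p n (v n))))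
      \<and> (\<forall>n\<in>{1..N}. \<forall>y\<in>supp Kf x n.
            v n < y \<and> wbar Kf x p n (v n) = wbar Kf x p n y
              \<longrightarrow> Qn calA \<pi> n v \<le> Qn calA \<pi> n (v(n := y))))"

definition welfare :: "nat \<Rightarrow> nat set set \<Rightarrow> (nat \<Rightarrow> nat) \<Rightarrow> (nat \<Rightarrow> nat \<Rightarrow> real) \<Rightarrow> (nat \<Rightarrow> nat \<Rightarrow> real)
     \<Rightarrow> ((nat \<Rightarrow> real) \<Rightarrow> nat set \<Rightarrow> real) \<Rightarrow> real" where
  "welfare N calA Kf x p \<pi> =
     (\<Sum>v\<in>profiles N Kf x. prob_prof N Kf x p v * (\<Sum>n\<in>{1..N}. Qn calA \<pi> n v * v n))"

definition MSW :: "nat \<Rightarrow> nat set set \<Rightarrow> (nat \<Rightarrow> nat) \<Rightarrow> (nat \<Rightarrow> nat \<Rightarrow> real) \<Rightarrow> (nat \<Rightarrow> nat \<Rightarrow> real) \<Rightarrow> real" where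
  "MSW N calA Kf x p =
     (\<Sum>v\<in>profiles N Kf x. prob_prof N Kf x p v * (MAX A\<in>calA. \<Sum>n\<in>A. v n))"

definition ELR :: "nat \<Rightarrow> nat set set \<Rightarrow> (nat \<Rightarrow> nat) \<Rightarrow> (nat \<Rightarrow> nat \<Rightarrow> real) \<Rightarrow> (nat \<Rightarrow> nat \<Rightarrow> real)
     \<Rightarrow> ((nat \<Rightarrow> real) \<Rightarrow> nat set \<Rightarrow> real) \<Rightarrow> real" where
  "ELR N calA Kf x p \<pi> = (MSW N calA Kf x p - welfare N calA Kf x p \<pi>) / MSW N calA Kf x p"

definition welfare_max_optimal :: "nat \<Rightarrow> nat set set \<Rightarrow> (nat \<Rightarrow> nat) \<Rightarrow> (nat \<Rightarrow> nat \<Rightarrow> real) \<Rightarrow> (nat \<Rightarrow> nat \<Rightarrow> real)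
     \<Rightarrow> ((nat \<Rightarrow> real) \<Rightarrow> nat set \<Rightarrow> real) \<Rightarrow> bool" where
  "welfare_max_optimal N calA Kf x p \<pi> \<longleftrightarrow>
     optimal_rule N calA Kf x p \<pi> \<and>
     (\<forall>\<pi>'. optimal_rule N calA Kf x p \<pi>' \<longrightarrow> welfare N calA Kf x p \<pi>' \<le> welfare N calA Kf x p \<pi>)"

definition eta :: "nat \<Rightarrow> nat set set \<Rightarrow> real \<Rightarrow> nat \<Rightarrow> real" where
  "eta N calA r K = Sup {ELR N calA Kf x p \<pi> | Kf x p \<pi>.
       valid_dist N r K Kf x p \<and> welfare_max_optimal N calA Kf x p \<pi>}"

end

theory Submission
  imports Defs
begin

(*
  Let q_n(v) be the probability that buyer n wins when a welfare maximizing set is drawn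
  uniformly at random, so that MSW = E[sum_n q_n(X) X_n]. At every bid profile an optimal rule
  puts its mass on virtual-welfare maximizers; by downward closure such a set beats the part of
  any welfare maximizer where the monotone virtual values are nonnegative, and virtual values
  never exceed values, so the realized welfare dominates E[sum_n q_n(X) max(wbar_n(X_n), 0)].
  Conditioned on the other bids, q_n is nondecreasing in n's own bid, and for a binary buyer
  with values L < H <= r L an elementary inequality gives
  r E[q_n X_n] <= (2r - 1) E[q_n max(wbar_n(X_n), 0)]. Summing over buyers,
  r MSW <= (2r - 1) welfare, i.e. ELR <= (r - 1)/(2r - 1).
*)

lemma idx_value:
  assumes "\<forall>i j. 1 \<le> i \<longrightarrow> i < j \<longrightarrow> j \<le> Kf n \<longrightarrow> x n i < x n j" and "i \<in> {1..Kf n}"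
  shows "idx Kf x n (x n i) = i"
  unfolding idx_def
proof (rule the_equality)
  fix j assume j: "j \<in> {1..Kf n} \<and> x n j = x n i"
  show "j = i"
    using assms j by (metis atLeastAtMost_iff less_irrefl linorder_neqE_nat)
qed (use assms in auto)

lemma hbar_eq_hpt:
  assumes "i \<le> Kf n"
    and "\<And>l. \<forall>j. 0 \<le> l j \<Longrightarrow> (\<Sum>j=0..Kf n. l j) = 1
           \<Longrightarrow> (\<Sum>j=0..Kf n. l j * gpt Kf p n j) = gpt Kf p n i
           \<Longrightarrow> hpt Kf x p n i \<le> (\<Sum>j=0..Kf n. l j * hpt Kf x p n j)"
  shows "hbar Kf x p n i = hpt Kf x p n i"
  unfolding hbar_def
proof (rule cInf_eq_minimum)
  let ?e = "\<lambda>j. if j = i then 1 else 0 :: real"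
  have "(\<Sum>j=0..Kf n. ?e j * f j) = f i" for f :: "nat \<Rightarrow> real"
  proof -
    have "(\<Sum>j=0..Kf n. ?e j * f j) = (\<Sum>j=0..Kf n. if j = i then f j else 0)"
      by (intro sum.cong) auto
    then show ?thesis using assms(1) by (simp add: sum.delta)
  qed
  from this[of "\<lambda>_. 1"] this[of "gpt Kf p n"] this[of "hpt Kf x p n"]
  show "hpt Kf x p n i \<in> {\<Sum>j=0..Kf n. l j * hpt Kf x p n j |l. (\<forall>j. 0 \<le> l j)
      \<and> (\<Sum>j=0..Kf n. l j) = 1 \<and> (\<Sum>j=0..Kf n. l j * gpt Kf p n j) = gpt Kf p n i}"
    by (intro CollectI exI[of _ ?e]) auto
qed (use assms(2) in blast)

lemma wbar_idx_single_type:
  assumes K: "Kf n = 1"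
  shows "wbar_idx Kf x p n 1 = x n 1"
proof -
  have sum01: "(\<Sum>j=0..Kf n. f j) = f 0 + (f 1 :: real)" for f
    using K by (simp add: sum.atLeast0_atMost_Suc)
  have g: "gpt Kf p n 0 = 0" "gpt Kf p n 1 = 1"
    and h: "hpt Kf x p n 0 = - x n 1" "hpt Kf x p n 1 = 0"
    using K by (auto simp: gpt_def hpt_def)
  have "hbar Kf x p n i = hpt Kf x p n i" if "i \<le> 1" for i
  proof (rule hbar_eq_hpt)
    fix l :: "nat \<Rightarrow> real"
    assume "\<forall>j. 0 \<le> l j" "(\<Sum>j=0..Kf n. l j) = 1" "(\<Sum>j=0..Kf n. l j * gpt Kf p n j) = gpt Kf p n i"
    then have l: "0 \<le> l 0" "l 0 + l 1 = 1" "l 1 = gpt Kf p n i"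
      by (simp_all only: sum01 g)
    have "i = 0 \<or> i = 1" using that by arith
    with l show "hpt Kf x p n i \<le> (\<Sum>j=0..Kf n. l j * hpt Kf x p n j)"
      unfolding sum01 h by (elim disjE) (simp_all only: g h, simp_all)
  qed (use that K in simp)
  then show ?thesis using g h by (simp add: wbar_idx_def)
qed

lemma binary_type_hull_vertices:
  fixes l :: "nat \<Rightarrow> real"
  assumes K: "Kf n = 2" and p: "0 < p n 1" "0 < p n 2" "p n 1 + p n 2 = 1"
    and LH: "x n 1 < x n 2"
    and i: "i \<le> 2" and l: "0 \<le> l 0" "0 \<le> l 1" "0 \<le> l 2" "l 0 + l 1 + l 2 = 1"
    and g_i: "l 1 * p n 1 + l 2 = gpt Kf p n i"
  shows "hpt Kf x p n i \<le> l 0 * hpt Kf x p n 0 + l 1 * hpt Kf x p n 1 + l 2 * hpt Kf x p n 2"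
proof -
  have g: "gpt Kf p n 0 = 0" "gpt Kf p n 1 = p n 1" "gpt Kf p n 2 = 1"
    and h: "hpt Kf x p n 0 = - x n 1" "hpt Kf x p n 1 = - x n 2 * p n 2" "hpt Kf x p n 2 = 0"
    using K by (auto simp: gpt_def hpt_def numeral_2_eq_2)
  have "0 \<le> l 1 * p n 1" "0 \<le> l 1 * p n 2" using l p by simp_all
  have split_l1: "l 1 * p n 1 + l 1 * p n 2 = l 1"
    using p(3) by (metis distrib_left mult.right_neutral)
  have "i = 0 \<or> i = 1 \<or> i = 2" using i by arith
  then consider "i = 0" | "i = 1" | "i = 2" by blast
  then show ?thesis
  proof cases
    case 1
    then have "l 1 * p n 1 + l 2 = 0" using g_i g by simp
    then have "l 1 * p n 1 = 0" "l 2 = 0" using \<open>0 \<le> l 1 * p n 1\<close> \<open>0 \<le> l 2\<close> by linarith+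
    then have "l 1 = 0" using p by simp
    then show ?thesis using 1 \<open>l 2 = 0\<close> l(4) h by simp
  next
    case 2
    have "l 1 * p n 1 + l 2 = p n 1" using g_i 2 g by simp
    then have "l 0 + l 1 * p n 2 = p n 2" using l(4) p(3) split_l1 by linarith
    have "l 0 * x n 1 + l 1 * (x n 2 * p n 2) \<le> l 0 * x n 2 + l 1 * (x n 2 * p n 2)"
      using l(1) LH by (simp add: mult_left_mono)
    also have "\<dots> = x n 2 * (l 0 + l 1 * p n 2)" by (simp add: algebra_simps)
    finally have "l 0 * x n 1 + l 1 * (x n 2 * p n 2) \<le> x n 2 * p n 2"
      using \<open>l 0 + l 1 * p n 2 = p n 2\<close> by simp
    then show ?thesis using 2 h by simp
  next
    case 3
    have "l 1 * p n 1 + l 2 = 1" using g_i 3 g by simp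
    then have "l 0 + l 1 * p n 2 = 0" using l(4) p(3) split_l1 by linarith
    then have "l 0 = 0" "l 1 * p n 2 = 0" using \<open>0 \<le> l 1 * p n 2\<close> l(1) by linarith+
    then have "l 1 = 0" using p by simp
    then show ?thesis using 3 \<open>l 0 = 0\<close> h by simp
  qed
qed

lemma wbar_idx_binary_type:
  assumes K: "Kf n = 2" and p: "0 < p n 1" "0 < p n 2" "p n 1 + p n 2 = 1"
    and LH: "x n 1 < x n 2"
  shows "wbar_idx Kf x p n 1 = (x n 1 - x n 2 * p n 2) / p n 1"
    and "wbar_idx Kf x p n 2 = x n 2"
proof -
  have sum012: "(\<Sum>j=0..Kf n. f j) = f 0 + f 1 + (f 2 :: real)" for f
    using K by (simp add: numeral_2_eq_2)
  have g: "gpt Kf p n 0 = 0" "gpt Kf p n 1 = p n 1" "gpt Kf p n 2 = 1"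
    and h: "hpt Kf x p n 0 = - x n 1" "hpt Kf x p n 1 = - x n 2 * p n 2" "hpt Kf x p n 2 = 0"
    using K by (auto simp: gpt_def hpt_def numeral_2_eq_2)
  have "hbar Kf x p n i = hpt Kf x p n i" if "i \<le> 2" for i
  proof (rule hbar_eq_hpt)
    fix l :: "nat \<Rightarrow> real"
    assume "\<forall>j. 0 \<le> l j" "(\<Sum>j=0..Kf n. l j) = 1" "(\<Sum>j=0..Kf n. l j * gpt Kf p n j) = gpt Kf p n i"
    then show "hpt Kf x p n i \<le> (\<Sum>j=0..Kf n. l j * hpt Kf x p n j)"
      unfolding sum012 g by (intro binary_type_hull_vertices[where Kf = Kf and n = n and p = p and x = x, OF assms that]) simp_all
  qed (use that K in simp)
  moreover have "1 - p n 1 = p n 2" using p(3) by simp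
  ultimately show "wbar_idx Kf x p n 1 = (x n 1 - x n 2 * p n 2) / p n 1"
    and "wbar_idx Kf x p n 2 = x n 2"
    using g h p(2) by (simp_all add: wbar_idx_def)
qed

lemma finite_family_of_subsets: "\<forall>A\<in>calA. A \<subseteq> I \<Longrightarrow> finite I \<Longrightarrow> finite calA"
  by (meson Pow_iff finite_Pow_iff finite_subset subsetI)

definition max_welfare :: "nat set set \<Rightarrow> (nat \<Rightarrow> real) \<Rightarrow> real" where
  "max_welfare calA v = (MAX C\<in>calA. \<Sum>m\<in>C. v m)"

definition welfare_maximizers :: "nat set set \<Rightarrow> (nat \<Rightarrow> real) \<Rightarrow> nat set set" where
  "welfare_maximizers calA v = {C\<in>calA. (\<Sum>m\<in>C. v m) = max_welfare calA v}"

definition maximizer_share :: "nat set set \<Rightarrow> nat \<Rightarrow> (nat \<Rightarrow> real) \<Rightarrow> real" where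
  "maximizer_share calA n v =
     real (card {C\<in>welfare_maximizers calA v. n \<in> C}) / real (card (welfare_maximizers calA v))"

lemma sum_le_max_welfare: "finite calA \<Longrightarrow> C \<in> calA \<Longrightarrow> (\<Sum>m\<in>C. v m) \<le> max_welfare calA v"
  unfolding max_welfare_def by (rule Max_ge) auto

lemma welfare_maximizers_nonempty:
  assumes "finite calA" "calA \<noteq> {}"
  shows "welfare_maximizers calA v \<noteq> {}"
proof -
  have "max_welfare calA v \<in> (\<lambda>C. \<Sum>m\<in>C. v m) ` calA"
    unfolding max_welfare_def using assms by (intro Max_in) auto
  then show ?thesis unfolding welfare_maximizers_def by auto
qed

lemma finite_welfare_maximizers: "finite calA \<Longrightarrow> finite (welfare_maximizers calA v)"
  unfolding welfare_maximizers_def by auto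

lemma card_welfare_maximizers_pos:
  "finite calA \<Longrightarrow> calA \<noteq> {} \<Longrightarrow> 0 < card (welfare_maximizers calA v)"
  by (simp add: card_gt_0_iff finite_welfare_maximizers welfare_maximizers_nonempty)

lemma sum_over_Collect_mem:
  assumes "finite I" "\<forall>A\<in>calA. A \<subseteq> I" "finite calA"
  shows "(\<Sum>n\<in>I. \<Sum>A\<in>{A\<in>calA. n \<in> A}. f A n) = (\<Sum>A\<in>calA. \<Sum>n\<in>A. f A n)"
proof -
  have "(\<Sum>n\<in>I. \<Sum>A\<in>{A\<in>calA. n \<in> A}. f A n) = (\<Sum>A\<in>calA. \<Sum>n\<in>{n\<in>I. n \<in> A}. f A n)"
    using assms(1,3) by (rule sum.swap_restrict)
  also have "\<dots> = (\<Sum>A\<in>calA. \<Sum>n\<in>A. f A n)"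
    using assms(2) by (intro sum.cong refl) (metis (mono_tags) Collect_mem_eq inf_absorb2 Int_def)
  finally show ?thesis .
qed

lemma sum_maximizer_share:
  assumes "finite calA" "calA \<noteq> {}" "\<forall>C\<in>calA. C \<subseteq> I" "finite I"
  shows "(\<Sum>n\<in>I. maximizer_share calA n v * f n)
       = (\<Sum>C\<in>welfare_maximizers calA v. \<Sum>n\<in>C. f n) / real (card (welfare_maximizers calA v))"
proof -
  let ?M = "welfare_maximizers calA v"
  have "(\<Sum>n\<in>I. maximizer_share calA n v * f n) = (\<Sum>n\<in>I. \<Sum>C\<in>{C\<in>?M. n \<in> C}. f n) / real (card ?M)"
    unfolding maximizer_share_def by (simp add: sum_divide_distrib)
  also have "(\<Sum>n\<in>I. \<Sum>C\<in>{C\<in>?M. n \<in> C}. f n) = (\<Sum>C\<in>?M. \<Sum>n\<in>C. f n)"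
    using assms by (intro sum_over_Collect_mem finite_welfare_maximizers) (auto simp: welfare_maximizers_def)
  finally show ?thesis .
qed

lemma sum_maximizer_share_value:
  assumes "finite calA" "calA \<noteq> {}" "\<forall>C\<in>calA. C \<subseteq> I" "finite I"
  shows "(\<Sum>n\<in>I. maximizer_share calA n v * v n) = max_welfare calA v"
proof -
  have "(\<Sum>C\<in>welfare_maximizers calA v. \<Sum>n\<in>C. v n)
      = real (card (welfare_maximizers calA v)) * max_welfare calA v"
    by (simp add: welfare_maximizers_def)
  then show ?thesis
    using sum_maximizer_share[OF assms, of v v] card_welfare_maximizers_pos[OF assms(1,2), of v] by simp
qed

lemma maximizer_share_nonneg: "0 \<le> maximizer_share calA n v"
  unfolding maximizer_share_def by simp

lemma maximizer_share_le_1: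
  assumes "finite calA"
  shows "maximizer_share calA n v \<le> 1"
proof -
  have "card {C\<in>welfare_maximizers calA v. n \<in> C} \<le> card (welfare_maximizers calA v)"
    using assms by (intro card_mono finite_welfare_maximizers) auto
  then show ?thesis unfolding maximizer_share_def by (auto simp: divide_le_eq_1)
qed

lemma sum_update_single:
  fixes v w :: "'a \<Rightarrow> 'b::ab_group_add"
  assumes "finite C" and "\<And>m. m \<noteq> n \<Longrightarrow> v m = w m"
  shows "(\<Sum>m\<in>C. w m) = (\<Sum>m\<in>C. v m) + (if n \<in> C then w n - v n else 0)"
proof -
  have rest: "(\<Sum>m\<in>C-{n}. w m) = (\<Sum>m\<in>C-{n}. v m)" using assms(2) by (intro sum.cong) auto
  show ?thesis
  proof (cases "n \<in> C")
    case True
    then show ?thesis using assms(1) rest by (simp add: sum.remove)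
  next
    case False
    then show ?thesis using rest by simp
  qed
qed

text \<open>Raising \<open>v n\<close> strictly makes \<open>n\<close> a member of every maximizer as soon as it belonged to one.\<close>
lemma maximizer_share_mono:
  assumes "finite calA" "calA \<noteq> {}" "\<forall>C\<in>calA. finite C"
    and "v n < w n" and "\<And>m. m \<noteq> n \<Longrightarrow> v m = w m"
  shows "maximizer_share calA n v \<le> maximizer_share calA n w"
proof (cases "\<exists>C\<in>welfare_maximizers calA v. n \<in> C")
  case False
  then have "{C\<in>welfare_maximizers calA v. n \<in> C} = {}" by auto
  then have "maximizer_share calA n v = 0" unfolding maximizer_share_def by (simp only: card.empty of_nat_0 div_0)
  then show ?thesis using maximizer_share_nonneg[of calA n w] by simp
next
  case True
  then obtain C where C: "C \<in> calA" "n \<in> C" "(\<Sum>m\<in>C. v m) = max_welfare calA v"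
    unfolding welfare_maximizers_def by auto
  have gain: "(\<Sum>m\<in>C'. w m) = (\<Sum>m\<in>C'. v m) + (if n \<in> C' then w n - v n else 0)"
    if "C' \<in> calA" for C'
    using assms(3,5) that by (intro sum_update_single) auto
  have "n \<in> C'" if "C' \<in> welfare_maximizers calA w" for C'
  proof (rule ccontr)
    assume "n \<notin> C'"
    then have "max_welfare calA w = (\<Sum>m\<in>C'. v m)" using that gain unfolding welfare_maximizers_def by auto
    also have "\<dots> \<le> (\<Sum>m\<in>C. v m)" using assms(1) that C(3) sum_le_max_welfare
      unfolding welfare_maximizers_def by fastforce
    also have "\<dots> < (\<Sum>m\<in>C. w m)" using gain[OF C(1)] C(2) assms(4) by simp
    finally show False using sum_le_max_welfare[OF assms(1) C(1), of w] by simp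
  qed
  then have "{C\<in>welfare_maximizers calA w. n \<in> C} = welfare_maximizers calA w" by blast
  then have "maximizer_share calA n w = 1"
    unfolding maximizer_share_def using card_welfare_maximizers_pos[OF assms(1,2), of w] by simp
  then show ?thesis using maximizer_share_le_1[OF assms(1)] by simp
qed

lemma sum_Qn_mult:
  assumes "finite calA" "\<forall>A\<in>calA. A \<subseteq> I" "finite I"
  shows "(\<Sum>n\<in>I. Qn calA \<pi> n v * v n) = (\<Sum>A\<in>calA. \<pi> v A * (\<Sum>n\<in>A. v n))"
  unfolding Qn_def sum_distrib_right sum_distrib_left
  using assms by (intro sum_over_Collect_mem) auto

lemma sum_positive_part_le_maximum:
  fixes g :: "nat \<Rightarrow> real"
  assumes down: "\<forall>A\<in>calA. \<forall>B. B \<subseteq> A \<longrightarrow> B \<in> calA" and C: "C \<in> calA" "finite C"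
    and A_max: "\<forall>B\<in>calA. (\<Sum>n\<in>B. g n) \<le> (\<Sum>n\<in>A. g n)"
  shows "(\<Sum>n\<in>C. max (g n) 0) \<le> (\<Sum>n\<in>A. g n)"
proof -
  have "(\<Sum>n\<in>C. max (g n) 0) = (\<Sum>n\<in>C. if 0 \<le> g n then g n else 0)"
    by (intro sum.cong) auto
  also have "\<dots> = (\<Sum>n\<in>{n\<in>C. 0 \<le> g n}. g n)"
    using C(2) by (simp add: sum.inter_filter)
  also have "\<dots> \<le> (\<Sum>n\<in>A. g n)"
  proof -
    have "{n\<in>C. 0 \<le> g n} \<in> calA" by (rule down[rule_format, OF C(1)]) blast
    then show ?thesis by (rule A_max[rule_format])
  qed
  finally show ?thesis .
qed

lemma share_weighted_virtual_le_value:
  fixes g :: "nat \<Rightarrow> real"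
  assumes fin: "finite calA" "calA \<noteq> {}" "\<forall>C\<in>calA. C \<subseteq> I" "finite I"
    and down: "\<forall>A\<in>calA. \<forall>B. B \<subseteq> A \<longrightarrow> B \<in> calA"
    and A: "A \<in> calA" "\<forall>B\<in>calA. (\<Sum>n\<in>B. g n) \<le> (\<Sum>n\<in>A. g n)"
    and g_le: "\<forall>n\<in>I. g n \<le> v n"
  shows "(\<Sum>n\<in>I. maximizer_share calA n v * max (g n) 0) \<le> (\<Sum>n\<in>A. v n)"
proof -
  let ?M = "welfare_maximizers calA v"
  have "(\<Sum>n\<in>C. max (g n) 0) \<le> (\<Sum>n\<in>A. v n)" if "C \<in> ?M" for C
  proof -
    have "C \<in> calA" using that by (simp add: welfare_maximizers_def)
    moreover have "finite C" using \<open>C \<in> calA\<close> fin(3,4) by (meson finite_subset)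
    ultimately have "(\<Sum>n\<in>C. max (g n) 0) \<le> (\<Sum>n\<in>A. g n)"
      using A(2) by (rule sum_positive_part_le_maximum[OF down])
    also have "\<dots> \<le> (\<Sum>n\<in>A. v n)"
      using g_le fin(3) A(1) by (intro sum_mono) auto
    finally show ?thesis .
  qed
  then have "(\<Sum>C\<in>?M. \<Sum>n\<in>C. max (g n) 0) \<le> real (card ?M) * (\<Sum>n\<in>A. v n)"
    by (rule sum_bounded_above)
  then show ?thesis
    using sum_maximizer_share[OF fin] card_welfare_maximizers_pos[OF fin(1,2), of v]
    by (simp add: divide_le_eq mult.commute)
qed

lemma share_weighted_virtual_le_realized_welfare:
  fixes g :: "nat \<Rightarrow> real"
  assumes fin: "finite calA" "calA \<noteq> {}" "\<forall>C\<in>calA. C \<subseteq> I" "finite I"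
    and down: "\<forall>A\<in>calA. \<forall>B. B \<subseteq> A \<longrightarrow> B \<in> calA"
    and prob: "\<forall>A. 0 \<le> \<pi> v A" "(\<Sum>A\<in>calA. \<pi> v A) = 1"
    and opt: "\<forall>A\<in>calA. 0 < \<pi> v A \<longrightarrow> (\<forall>B\<in>calA. (\<Sum>n\<in>B. g n) \<le> (\<Sum>n\<in>A. g n))"
    and g_le: "\<forall>n\<in>I. g n \<le> v n"
  shows "(\<Sum>n\<in>I. maximizer_share calA n v * max (g n) 0) \<le> (\<Sum>n\<in>I. Qn calA \<pi> n v * v n)"
proof -
  let ?T = "\<Sum>n\<in>I. maximizer_share calA n v * max (g n) 0"
  have "?T = (\<Sum>A\<in>calA. \<pi> v A * ?T)" using prob(2) by (simp flip: sum_distrib_right)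
  also have "\<dots> \<le> (\<Sum>A\<in>calA. \<pi> v A * (\<Sum>n\<in>A. v n))"
  proof (rule sum_mono)
    fix A assume A: "A \<in> calA"
    show "\<pi> v A * ?T \<le> \<pi> v A * (\<Sum>n\<in>A. v n)"
    proof (cases "\<pi> v A = 0")
      case False
      then have "0 < \<pi> v A" using prob(1) by (simp add: order_less_le)
      then have "?T \<le> (\<Sum>n\<in>A. v n)"
        using A opt g_le by (intro share_weighted_virtual_le_value[OF fin down]) auto
      then show ?thesis using prob(1) by (simp add: mult_left_mono)
    qed simp
  qed
  also have "\<dots> = (\<Sum>n\<in>I. Qn calA \<pi> n v * v n)"
    using fin by (simp add: sum_Qn_mult)
  finally show ?thesis .
qed

lemma binary_inequality_nonneg_virtual_low:
  fixes L H r p1 p2 a b :: real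
  assumes L: "0 < L" "L < H" "H \<le> r * L" "1 < r" and p: "0 < p2" "p1 + p2 = 1"
    and ab: "0 \<le> a" "a \<le> b" and virtual: "H * p2 \<le> L"
  shows "r * (p1 * a * L + p2 * b * H) \<le> (2*r-1) * (a * (L - H * p2) + p2 * b * H)"
proof -
  \<comment> \<open>The difference of the two sides is affine in \<open>a\<close> with slope \<open>c\<close>, and it is nonnegative at
    \<open>a = 0\<close> and at \<open>a = b\<close>.\<close>
  define c where "c = (r-1)*L - p2*((2*r-1)*H - r*L)"
  have "r*p2*(H-L)*H \<le> (r-1)*L*H"
  proof -
    have "r*p2*(H-L)*H = r*(H-L)*(p2*H)" by (simp add: algebra_simps)
    also have "\<dots> \<le> r*(H-L)*L" using virtual L by (intro mult_left_mono) (auto simp: mult.commute)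
    also have "\<dots> \<le> (r-1)*L*H" using L by (simp add: algebra_simps)
    finally show ?thesis .
  qed
  then have "r*p2*(H-L) \<le> (r-1)*L" using L by simp
  then have "0 \<le> (r-1)*p2*H + c" unfolding c_def by (simp add: algebra_simps)
  have "0 \<le> (r-1)*p2*b*H + a*c"
  proof (cases "0 \<le> c")
    case True
    then show ?thesis using ab L p by simp
  next
    case False
    then have "b * c \<le> a * c" using ab by (simp add: mult_right_mono_neg)
    moreover have "0 \<le> b * ((r-1)*p2*H + c)" using \<open>0 \<le> (r-1)*p2*H + c\<close> ab by simp
    ultimately show ?thesis by (simp add: algebra_simps)
  qed
  moreover have "(2*r-1) * (a * (L - H * p2) + p2 * b * H) - r * (p1 * a * L + p2 * b * H)
       = (r-1)*p2*b*H + a*c"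
  proof -
    have "p1 = 1 - p2" using p(2) by simp
    then show ?thesis unfolding c_def by (simp only:) (simp add: algebra_simps)
  qed
  ultimately have "0 \<le> (2*r-1) * (a * (L - H * p2) + p2 * b * H) - r * (p1 * a * L + p2 * b * H)"
    by (simp only:)
  then show ?thesis by (simp only: diff_ge_0_iff_ge)
qed

lemma binary_inequality_neg_virtual_low:
  fixes L H r p1 p2 a b :: real
  assumes L: "0 < L" "L < H" "H \<le> r * L" "1 < r" and p: "0 < p2" "p1 + p2 = 1"
    and ab: "0 \<le> a" "a \<le> b" and virtual: "L < H * p2"
  shows "r * (p1 * a * L + p2 * b * H) \<le> (2*r-1) * (p2 * b * H)"
proof -
  have "H * p2 \<le> (r * L) * p2" using L p by (simp add: mult_right_mono)
  then have "L * 1 < L * (r * p2)" using virtual by (simp add: algebra_simps)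
  then have "1 < r * p2" using L by (simp only: mult_less_cancel_left_pos)
  moreover have "r * p1 = r - r * p2"
    using p(2) by (metis add_diff_cancel_right' right_diff_distrib mult.right_neutral)
  ultimately have "r * p1 * L \<le> (r-1) * L" using L by (intro mult_right_mono) auto
  also have "\<dots> \<le> (r-1) * (p2 * H)" using virtual L by (intro mult_left_mono) (auto simp: mult.commute)
  finally have "r * p1 * L * a \<le> (r-1) * (p2 * H) * a" using ab by (intro mult_right_mono)
  also have "\<dots> \<le> (r-1) * (p2 * H) * b" using ab L p by (intro mult_left_mono) auto
  finally show ?thesis by (simp add: algebra_simps)
qed

lemma binary_buyer_inequality:
  fixes L H r p1 p2 a b :: real
  assumes "0 < L" "L < H" "H \<le> r * L" "1 < r" and "0 < p1" "0 < p2" "p1 + p2 = 1"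
    and "0 \<le> a" "a \<le> b"
  shows "r * (p1 * a * L + p2 * b * H) \<le> (2*r-1) * (p1 * a * max ((L - H * p2) / p1) 0 + p2 * b * H)"
proof (cases "H * p2 \<le> L")
  case True
  then have "p1 * a * max ((L - H * p2) / p1) 0 = a * (L - H * p2)" using assms by simp
  then show ?thesis using binary_inequality_nonneg_virtual_low[OF assms(1-4,6-9) True] by (simp only:)
next
  case False
  then have "max ((L - H * p2) / p1) 0 = 0" using assms by (simp add: divide_nonpos_pos)
  then show ?thesis using binary_inequality_neg_virtual_low[of L H r p2 p1 a b] assms False by simp
qed

lemma loss_ratio_le:
  fixes M W r :: real
  assumes "1 < r" "r * M \<le> (2*r-1) * W" "0 \<le> M"
  shows "(M - W) / M \<le> (r - 1) / (2*r - 1)"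
proof (cases "M = 0")
  case False
  then have "0 < M" using assms(3) by simp
  moreover have "(M - W) * (2*r-1) \<le> (r-1) * M" using assms(2) by (simp add: algebra_simps)
  ultimately show ?thesis using assms(1) by (simp add: divide_le_eq le_divide_eq mult.commute)
qed (use assms in simp)

lemma sum_PiE_split_coordinate:
  assumes "n \<in> I"
  shows "(\<Sum>v\<in>PiE I S. f v) = (\<Sum>u\<in>PiE (I-{n}) S. \<Sum>y\<in>S n. f (u(n:=y)))"
proof -
  have "(\<Sum>v\<in>PiE I S. f v) = (\<Sum>v\<in>(\<lambda>(y, g). g(n := y)) ` (S n \<times> PiE (I-{n}) S). f v)"
    using assms by (simp add: PiE_insert_eq[symmetric] insert_absorb)
  also have "\<dots> = (\<Sum>(y, u)\<in>S n \<times> PiE (I-{n}) S. f (u(n := y)))"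
    by (subst sum.reindex) (auto intro: inj_combinator simp: case_prod_beta)
  also have "\<dots> = (\<Sum>u\<in>PiE (I-{n}) S. \<Sum>y\<in>S n. f (u(n:=y)))"
    by (simp add: sum.cartesian_product[symmetric] sum.swap[of _ "S n"])
  finally show ?thesis .
qed

lemma welfare_le_MSW:
  assumes "finite calA" "\<forall>A\<in>calA. A \<subseteq> {1..N}" "alloc_rule N calA Kf x \<pi>"
    and "\<And>v. v \<in> profiles N Kf x \<Longrightarrow> 0 \<le> prob_prof N Kf x p v"
  shows "welfare N calA Kf x p \<pi> \<le> MSW N calA Kf x p"
  unfolding welfare_def MSW_def max_welfare_def[symmetric]
proof (intro sum_mono mult_left_mono)
  fix v assume v: "v \<in> profiles N Kf x"
  then have \<pi>: "\<forall>A. 0 \<le> \<pi> v A" "(\<Sum>A\<in>calA. \<pi> v A) = 1"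
    using assms(3) unfolding alloc_rule_def by auto
  have "(\<Sum>n\<in>{1..N}. Qn calA \<pi> n v * v n) = (\<Sum>A\<in>calA. \<pi> v A * (\<Sum>n\<in>A. v n))"
    using assms(1,2) by (intro sum_Qn_mult) auto
  also have "\<dots> \<le> (\<Sum>A\<in>calA. \<pi> v A * max_welfare calA v)"
    using \<pi> assms(1) by (intro sum_mono mult_left_mono sum_le_max_welfare) auto
  also have "\<dots> = max_welfare calA v" using \<pi> by (simp flip: sum_distrib_right)
  finally show "(\<Sum>n\<in>{1..N}. Qn calA \<pi> n v * v n) \<le> max_welfare calA v" .
  show "0 \<le> prob_prof N Kf x p v" using assms(4) v .
qed

definition maximizer_rule :: "nat set set \<Rightarrow> (nat \<Rightarrow> real) \<Rightarrow> nat set \<Rightarrow> real" where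
  "maximizer_rule calA v A = (if A = (SOME C. C \<in> welfare_maximizers calA v) then 1 else 0)"

lemma maximizer_rule_support:
  assumes "finite calA" "calA \<noteq> {}"
  obtains C where "C \<in> welfare_maximizers calA v" "\<And>A. maximizer_rule calA v A = (if A = C then 1 else 0)"
proof -
  have "(SOME C. C \<in> welfare_maximizers calA v) \<in> welfare_maximizers calA v"
    using welfare_maximizers_nonempty[OF assms] by (simp add: some_in_eq)
  then show thesis by (rule that) (simp add: maximizer_rule_def)
qed

lemma alloc_rule_maximizer_rule:
  assumes "finite calA" "calA \<noteq> {}"
  shows "alloc_rule N calA Kf x (maximizer_rule calA)"
  unfolding alloc_rule_def
proof (intro ballI conjI allI impI)
  fix v A
  obtain C where C: "C \<in> welfare_maximizers calA v"
    and rule: "\<And>A. maximizer_rule calA v A = (if A = C then 1 else 0)"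
    using maximizer_rule_support[OF assms, where v = v] by blast
  have "C \<in> calA" using C by (simp add: welfare_maximizers_def)
  then show "0 \<le> maximizer_rule calA v A" "A \<notin> calA \<Longrightarrow> maximizer_rule calA v A = 0"
    "(\<Sum>A\<in>calA. maximizer_rule calA v A) = 1"
    using assms(1) by (auto simp: rule sum.delta')
qed

lemma welfare_maximizer_rule:
  assumes "finite calA" "calA \<noteq> {}" "\<forall>A\<in>calA. A \<subseteq> {1..N}"
  shows "welfare N calA Kf x p (maximizer_rule calA) = MSW N calA Kf x p"
  unfolding welfare_def MSW_def max_welfare_def[symmetric]
proof (intro sum.cong refl arg_cong[where f = "\<lambda>t. _ * t"])
  fix v
  obtain C where C: "C \<in> welfare_maximizers calA v"
    and rule: "\<And>A. maximizer_rule calA v A = (if A = C then 1 else 0)"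
    using maximizer_rule_support[OF assms(1,2), where v = v] by blast
  have "(\<Sum>n\<in>{1..N}. Qn calA (maximizer_rule calA) n v * v n)
      = (\<Sum>A\<in>calA. maximizer_rule calA v A * (\<Sum>n\<in>A. v n))"
    using assms(1,3) by (intro sum_Qn_mult) auto
  also have "\<dots> = (\<Sum>A\<in>calA. if A = C then (\<Sum>n\<in>A. v n) else 0)"
    by (intro sum.cong) (simp_all add: rule)
  also have "\<dots> = (\<Sum>n\<in>C. v n)"
    using C assms(1) by (simp add: sum.delta' welfare_maximizers_def)
  also have "\<dots> = max_welfare calA v" using C by (simp add: welfare_maximizers_def)
  finally show "(\<Sum>n\<in>{1..N}. Qn calA (maximizer_rule calA) n v * v n) = max_welfare calA v" .
qed

locale binary_auction =
  fixes N :: nat and calA :: "nat set set" and r :: real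
    and Kf :: "nat \<Rightarrow> nat" and x p :: "nat \<Rightarrow> nat \<Rightarrow> real"
  assumes N_pos: "1 \<le> N"
    and feasible_subset: "\<forall>A\<in>calA. A \<subseteq> {1..N}"
    and empty_feasible: "{} \<in> calA"
    and downward_closed: "\<forall>A\<in>calA. \<forall>B. B \<subseteq> A \<longrightarrow> B \<in> calA"
    and r_gt_1: "1 < r"
    and valid: "valid_dist N r 2 Kf x p"
begin

abbreviation virtual_pos :: "nat \<Rightarrow> real \<Rightarrow> real" where
  "virtual_pos n y \<equiv> max (wbar Kf x p n y) 0"

lemma finite_calA: "finite calA"
  using feasible_subset by (rule finite_family_of_subsets) simp

lemma calA_nonempty: "calA \<noteq> {}"
  using empty_feasible by auto

lemma finite_feasible: "\<forall>C\<in>calA. finite C"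
  using feasible_subset finite_subset by blast

context
  fixes n assumes n: "n \<in> {1..N}"
begin

lemma buyer_valid:
  "1 \<le> Kf n \<and> Kf n \<le> 2 \<and> 0 < x n 1
   \<and> (\<forall>i j. 1 \<le> i \<longrightarrow> i < j \<longrightarrow> j \<le> Kf n \<longrightarrow> x n i < x n j)
   \<and> (\<forall>i\<in>{1..Kf n}. 0 < p n i) \<and> (\<Sum>i=1..Kf n. p n i) = 1"
  using valid n unfolding valid_dist_def by auto

lemma single_or_binary: "Kf n = 1 \<or> Kf n = 2"
proof -
  have "1 \<le> Kf n" "Kf n \<le> 2" using buyer_valid by auto
  then show ?thesis by arith
qed

lemma high_le_r_low: "x n (Kf n) \<le> r * x n 1"
proof -
  let ?I = "{1..N}"
  have pos: "0 < Min ((\<lambda>m. x m 1) ` ?I)"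
    using N_pos valid by (subst Min_gr_iff) (auto simp: valid_dist_def)
  have "x n (Kf n) \<le> Max ((\<lambda>m. x m (Kf m)) ` ?I)" using n by (intro Max_ge) auto
  also have "\<dots> \<le> r * Min ((\<lambda>m. x m 1) ` ?I)"
    using valid pos by (simp add: valid_dist_def divide_le_eq)
  also have "\<dots> \<le> r * x n 1" using r_gt_1 n by (intro mult_left_mono Min_le) auto
  finally show ?thesis .
qed

lemma pr1_value: "i \<in> {1..Kf n} \<Longrightarrow> pr1 Kf x p n (x n i) = p n i"
  using idx_value buyer_valid by (simp add: pr1_def)

lemma wbar_value: "i \<in> {1..Kf n} \<Longrightarrow> wbar Kf x p n (x n i) = wbar_idx Kf x p n i"
  using idx_value buyer_valid by (simp add: wbar_def)

lemma pr1_nonneg: "y \<in> supp Kf x n \<Longrightarrow> 0 \<le> pr1 Kf x p n y"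
  using pr1_value buyer_valid by (force simp: supp_def)

lemma single_type:
  assumes "Kf n = 1"
  shows "supp Kf x n = {x n 1}" "wbar Kf x p n (x n 1) = x n 1"
  using assms wbar_value wbar_idx_single_type by (simp_all add: supp_def)

lemma binary_type:
  assumes "Kf n = 2"
  shows "supp Kf x n = {x n 1, x n 2}" and "x n 1 < x n 2" and "p n 1 + p n 2 = 1"
    and "wbar Kf x p n (x n 1) = (x n 1 - x n 2 * p n 2) / p n 1"
    and "wbar Kf x p n (x n 2) = x n 2"
proof -
  show "supp Kf x n = {x n 1, x n 2}" using assms by (auto simp: supp_def numeral_2_eq_2 le_Suc_eq)
  show "x n 1 < x n 2" "p n 1 + p n 2 = 1"
    using assms buyer_valid by (simp_all add: numeral_2_eq_2)
  then show "wbar Kf x p n (x n 1) = (x n 1 - x n 2 * p n 2) / p n 1"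
    and "wbar Kf x p n (x n 2) = x n 2"
    using assms buyer_valid wbar_value wbar_idx_binary_type[of Kf n p x] by simp_all
qed

lemma wbar_le_value:
  assumes "y \<in> supp Kf x n"
  shows "wbar Kf x p n y \<le> y"
proof (cases "Kf n = 1")
  case True
  then show ?thesis using assms single_type by simp
next
  case False
  then have K: "Kf n = 2" using single_or_binary by simp
  have p: "0 < p n 1" "0 < p n 2" using K buyer_valid by auto
  have "x n 1 - x n 2 * p n 2 \<le> x n 1 - x n 1 * p n 2"
    using binary_type(2)[OF K] p by simp
  also have "\<dots> = x n 1 * p n 1"
  proof -
    have "p n 1 = 1 - p n 2" using binary_type(3)[OF K] by simp
    then show ?thesis by (simp add: right_diff_distrib)
  qed
  finally have "wbar Kf x p n (x n 1) \<le> x n 1"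
    using binary_type(4)[OF K] p by (simp add: divide_le_eq)
  then show ?thesis using assms binary_type[OF K] by auto
qed

lemma prob_prof_update:
  "prob_prof N Kf x p (u(n := y)) = pr1 Kf x p n y * (\<Prod>m\<in>{1..N}-{n}. pr1 Kf x p m (u m))"
proof -
  have "prob_prof N Kf x p (u(n := y)) = pr1 Kf x p n y * (\<Prod>m\<in>{1..N}-{n}. pr1 Kf x p m ((u(n := y)) m))"
    unfolding prob_prof_def using n by (simp add: prod.remove)
  also have "(\<Prod>m\<in>{1..N}-{n}. pr1 Kf x p m ((u(n := y)) m)) = (\<Prod>m\<in>{1..N}-{n}. pr1 Kf x p m (u m))"
    by (intro prod.cong) auto
  finally show ?thesis .
qed

text \<open>Conditioned on the bids \<open>u\<close> of the other buyers, \<open>n\<close>'s share is monotone in its own bid;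
  this is where the binary inequality applies.\<close>
lemma conditional_buyer_bound:
  "r * (\<Sum>y\<in>supp Kf x n. pr1 Kf x p n y * maximizer_share calA n (u(n:=y)) * y)
   \<le> (2*r-1) * (\<Sum>y\<in>supp Kf x n. pr1 Kf x p n y * maximizer_share calA n (u(n:=y)) * virtual_pos n y)"
proof (cases "Kf n = 1")
  case True
  have "0 \<le> p n 1 * maximizer_share calA n (u(n := x n 1)) * x n 1"
    using True buyer_valid by (simp add: maximizer_share_nonneg)
  then show ?thesis using True single_type pr1_value[of 1] buyer_valid r_gt_1
    by (simp add: mult_right_mono)
next
  case False
  then have K: "Kf n = 2" using single_or_binary by simp
  let ?a = "maximizer_share calA n (u(n := x n 1))" and ?b = "maximizer_share calA n (u(n := x n 2))"
  have "?a \<le> ?b"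
    using binary_type(2)[OF K]
    by (intro maximizer_share_mono finite_calA calA_nonempty finite_feasible) auto
  then have "r * (p n 1 * ?a * x n 1 + p n 2 * ?b * x n 2)
      \<le> (2*r-1) * (p n 1 * ?a * max ((x n 1 - x n 2 * p n 2) / p n 1) 0 + p n 2 * ?b * x n 2)"
    using K buyer_valid binary_type(2,3)[OF K] high_le_r_low r_gt_1
    by (intro binary_buyer_inequality maximizer_share_nonneg) auto
  moreover have "max (x n 2) 0 = x n 2" using binary_type(2)[OF K] buyer_valid by simp
  ultimately show ?thesis
    using binary_type[OF K] pr1_value[of 1] pr1_value[of 2] K by simp
qed

end

lemma prob_prof_nonneg: "v \<in> profiles N Kf x \<Longrightarrow> 0 \<le> prob_prof N Kf x p v"
  unfolding prob_prof_def profiles_def by (intro prod_nonneg pr1_nonneg) auto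

lemma MSW_nonneg: "0 \<le> MSW N calA Kf x p"
  unfolding MSW_def max_welfare_def[symmetric]
  using sum_le_max_welfare[OF finite_calA empty_feasible]
  by (intro sum_nonneg mult_nonneg_nonneg prob_prof_nonneg) auto

lemma buyer_bound:
  assumes n: "n \<in> {1..N}"
  shows "r * (\<Sum>v\<in>profiles N Kf x. prob_prof N Kf x p v * maximizer_share calA n v * v n)
   \<le> (2*r-1) * (\<Sum>v\<in>profiles N Kf x. prob_prof N Kf x p v * maximizer_share calA n v * virtual_pos n (v n))"
proof -
  let ?U = "PiE ({1..N}-{n}) (supp Kf x)"
  let ?G = "\<lambda>u. \<Prod>m\<in>{1..N}-{n}. pr1 Kf x p m (u m)"
  have split: "(\<Sum>v\<in>profiles N Kf x. prob_prof N Kf x p v * maximizer_share calA n v * f (v n))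
      = (\<Sum>u\<in>?U. ?G u * (\<Sum>y\<in>supp Kf x n. pr1 Kf x p n y * maximizer_share calA n (u(n:=y)) * f y))" for f
    unfolding profiles_def sum_PiE_split_coordinate[OF n] prob_prof_update[OF n]
    by (simp add: sum_distrib_left mult_ac)
  have "r * (\<Sum>v\<in>profiles N Kf x. prob_prof N Kf x p v * maximizer_share calA n v * v n)
      = (\<Sum>u\<in>?U. ?G u * (r * (\<Sum>y\<in>supp Kf x n. pr1 Kf x p n y * maximizer_share calA n (u(n:=y)) * y)))"
    using split[of "\<lambda>y. y"] by (simp add: sum_distrib_left mult_ac)
  also have "\<dots> \<le> (\<Sum>u\<in>?U. ?G u * ((2*r-1) *
      (\<Sum>y\<in>supp Kf x n. pr1 Kf x p n y * maximizer_share calA n (u(n:=y)) * virtual_pos n y)))"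
  proof (rule sum_mono)
    fix u assume "u \<in> ?U"
    then have "0 \<le> ?G u" by (intro prod_nonneg pr1_nonneg) (auto simp: PiE_iff)
    then show "?G u * (r * (\<Sum>y\<in>supp Kf x n. pr1 Kf x p n y * maximizer_share calA n (u(n:=y)) * y))
        \<le> ?G u * ((2*r-1) * (\<Sum>y\<in>supp Kf x n. pr1 Kf x p n y * maximizer_share calA n (u(n:=y)) * virtual_pos n y))"
      by (rule mult_left_mono[OF conditional_buyer_bound[OF n]])
  qed
  also have "\<dots> = (2*r-1) * (\<Sum>v\<in>profiles N Kf x. prob_prof N Kf x p v * maximizer_share calA n v * virtual_pos n (v n))"
    using split[of "virtual_pos n"] by (simp add: sum_distrib_left mult_ac)
  finally show ?thesis .
qed

lemma MSW_eq_sum_shares: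
  "MSW N calA Kf x p
   = (\<Sum>n\<in>{1..N}. \<Sum>v\<in>profiles N Kf x. prob_prof N Kf x p v * maximizer_share calA n v * v n)"
  unfolding MSW_def max_welfare_def[symmetric]
  unfolding sum_maximizer_share_value[OF finite_calA calA_nonempty feasible_subset finite_atLeastAtMost, symmetric]
  by (simp add: sum_distrib_left mult.assoc) (rule sum.swap)

lemma virtual_share_le_welfare:
  assumes "optimal_rule N calA Kf x p \<pi>"
  shows "(\<Sum>n\<in>{1..N}. \<Sum>v\<in>profiles N Kf x. prob_prof N Kf x p v * maximizer_share calA n v * virtual_pos n (v n))
    \<le> welfare N calA Kf x p \<pi>"
proof -
  have "(\<Sum>n\<in>{1..N}. \<Sum>v\<in>profiles N Kf x. prob_prof N Kf x p v * maximizer_share calA n v * virtual_pos n (v n))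
      = (\<Sum>v\<in>profiles N Kf x. prob_prof N Kf x p v * (\<Sum>n\<in>{1..N}. maximizer_share calA n v * virtual_pos n (v n)))"
    by (subst sum.swap) (simp add: sum_distrib_left mult.assoc)
  also have "\<dots> \<le> welfare N calA Kf x p \<pi>"
    unfolding welfare_def
  proof (rule sum_mono, rule mult_left_mono)
    fix v assume v: "v \<in> profiles N Kf x"
    show "0 \<le> prob_prof N Kf x p v" using v by (rule prob_prof_nonneg)
    show "(\<Sum>n\<in>{1..N}. maximizer_share calA n v * virtual_pos n (v n)) \<le> (\<Sum>n\<in>{1..N}. Qn calA \<pi> n v * v n)"
      using assms v wbar_le_value finite_calA calA_nonempty feasible_subset downward_closed
      unfolding optimal_rule_def alloc_rule_def profiles_def
      by (intro share_weighted_virtual_le_realized_welfare) (auto simp: PiE_iff)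
  qed
  finally show ?thesis .
qed

lemma MSW_le_welfare:
  assumes "optimal_rule N calA Kf x p \<pi>"
  shows "r * MSW N calA Kf x p \<le> (2*r-1) * welfare N calA Kf x p \<pi>"
proof -
  let ?V = "\<lambda>n. \<Sum>v\<in>profiles N Kf x. prob_prof N Kf x p v * maximizer_share calA n v * v n"
  let ?W = "\<lambda>n. \<Sum>v\<in>profiles N Kf x. prob_prof N Kf x p v * maximizer_share calA n v * virtual_pos n (v n)"
  have "r * MSW N calA Kf x p = (\<Sum>n\<in>{1..N}. r * ?V n)"
    unfolding MSW_eq_sum_shares by (rule sum_distrib_left)
  also have "\<dots> \<le> (\<Sum>n\<in>{1..N}. (2*r-1) * ?W n)"
    by (intro sum_mono buyer_bound)
  also have "\<dots> = (2*r-1) * (\<Sum>n\<in>{1..N}. ?W n)"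
    by (rule sum_distrib_left[symmetric])
  also have "\<dots> \<le> (2*r-1) * welfare N calA Kf x p \<pi>"
    using r_gt_1 by (intro mult_left_mono virtual_share_le_welfare assms) auto
  finally show ?thesis .
qed

lemma ELR_le:
  assumes "optimal_rule N calA Kf x p \<pi>"
  shows "ELR N calA Kf x p \<pi> \<le> (r - 1) / (2*r - 1)"
  unfolding ELR_def using MSW_le_welfare[OF assms] MSW_nonneg r_gt_1 by (rule loss_ratio_le[rotated])

end

lemma optimal_rule_maximizer_rule_unit_types:
  assumes sub: "\<forall>A\<in>calA. A \<subseteq> {1..N}" and fin: "finite calA" and ne: "calA \<noteq> {}"
  shows "optimal_rule N calA (\<lambda>_. 1) (\<lambda>_ _. 1) p (maximizer_rule calA)"
  unfolding optimal_rule_def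
proof (intro conjI alloc_rule_maximizer_rule fin ne ballI impI allI)
  let ?Kf = "\<lambda>_. 1 :: nat" and ?x = "\<lambda>_ _. 1 :: real"
  have wbar: "wbar ?Kf ?x p n 1 = 1" for n
    using idx_value[of ?Kf n ?x 1] wbar_idx_single_type[of ?Kf n ?x p] by (simp add: wbar_def)
  have profile: "v n = 1" if "v \<in> profiles N ?Kf ?x" "n \<in> {1..N}" for v n
    using that by (auto simp: profiles_def supp_def PiE_iff)
  fix v assume v: "v \<in> profiles N ?Kf ?x"
  {
    fix A B assume A: "A \<in> calA" "0 < maximizer_rule calA v A" and B: "B \<in> calA"
    obtain C where C: "C \<in> welfare_maximizers calA v"
      and rule: "\<And>A. maximizer_rule calA v A = (if A = C then 1 else 0)"
      using maximizer_rule_support[OF fin ne, where v = v] by blast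
    have "A = C" using A(2) rule by (auto split: if_splits)
    have virtual: "(\<Sum>n\<in>D. wbar ?Kf ?x p n (v n)) = (\<Sum>n\<in>D. v n)" if "D \<in> calA" for D
      using that sub profile[OF v] wbar by (intro sum.cong) (auto simp: subset_iff)
    have "(\<Sum>n\<in>C. v n) = max_welfare calA v" using C by (simp add: welfare_maximizers_def)
    then show "(\<Sum>n\<in>B. wbar ?Kf ?x p n (v n)) \<le> (\<Sum>n\<in>A. wbar ?Kf ?x p n (v n))"
      unfolding virtual[OF B] virtual[OF A(1)] unfolding \<open>A = C\<close> using sum_le_max_welfare[OF fin B] by simp
  next
    fix n y assume "n \<in> {1..N}" "y \<in> supp ?Kf ?x n"
      and lt: "v n < y \<and> wbar ?Kf ?x p n (v n) = wbar ?Kf ?x p n y"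
    then have "v n = y" using profile[OF v] by (simp add: supp_def)
    with lt show "Qn calA (maximizer_rule calA) n v \<le> Qn calA (maximizer_rule calA) n (v(n := y))"
      by simp
  }
qed

text \<open>The supremum defining \<open>eta\<close> ranges over a nonempty set: with every type equal to \<open>1\<close>,
  virtual values coincide with values, so the welfare maximizing rule is optimal.\<close>
lemma exists_welfare_max_optimal:
  assumes N: "1 \<le> N" and sub: "\<forall>A\<in>calA. A \<subseteq> {1..N}" and emp: "{} \<in> calA" and r: "1 < r"
  shows "\<exists>Kf x p \<pi>. valid_dist N r 2 Kf x p \<and> welfare_max_optimal N calA Kf x p \<pi>"
proof -
  let ?Kf = "\<lambda>_. 1 :: nat" and ?x = "\<lambda>_ _. 1 :: real" and ?p = "\<lambda>_ _. 1 :: real"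
  have fin: "finite calA" using sub by (rule finite_family_of_subsets) simp
  have ne: "calA \<noteq> {}" using emp by auto
  have "(\<lambda>n. 1::real) ` {1..N} = {1}" using N by auto
  then have "valid_dist N r 2 ?Kf ?x ?p"
    using r by (simp add: valid_dist_def)
  moreover have "welfare_max_optimal N calA ?Kf ?x ?p (maximizer_rule calA)"
    unfolding welfare_max_optimal_def welfare_maximizer_rule[OF fin ne sub]
    using optimal_rule_maximizer_rule_unit_types[OF sub fin ne] welfare_le_MSW[OF fin sub]
    by (auto simp: optimal_rule_def prob_prof_def pr1_def)
  ultimately show ?thesis by blast
qed

theorem proposition3:
  fixes N :: nat and calA :: "nat set set" and r :: real
  assumes "N \<ge> 1"
    and "\<forall>A\<in>calA. A \<subseteq> {1..N}"
    and "{} \<in> calA"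
    and "\<forall>A\<in>calA. \<forall>B. B \<subseteq> A \<longrightarrow> B \<in> calA"
    and "\<forall>n\<in>{1..N}. \<exists>A\<in>calA. n \<in> A"
    and "r > 1"
  shows "eta N calA r 2 \<le> (r - 1) / (2 * r - 1) \<and> (r - 1) / (2 * r - 1) \<le> 1 / 2"
proof
  show "(r - 1) / (2 * r - 1) \<le> 1 / 2" using assms(6) by (simp add: divide_le_eq)
  show "eta N calA r 2 \<le> (r - 1) / (2 * r - 1)"
    unfolding eta_def
  proof (rule cSup_least)
    show "{ELR N calA Kf x p \<pi> | Kf x p \<pi>.
        valid_dist N r 2 Kf x p \<and> welfare_max_optimal N calA Kf x p \<pi>} \<noteq> {}"
      using exists_welfare_max_optimal[OF assms(1-3,6)] by blast
  next
    fix e assume "e \<in> {ELR N calA Kf x p \<pi> | Kf x p \<pi>.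
        valid_dist N r 2 Kf x p \<and> welfare_max_optimal N calA Kf x p \<pi>}"
    then obtain Kf x p \<pi> where e: "e = ELR N calA Kf x p \<pi>" and "valid_dist N r 2 Kf x p"
      and "optimal_rule N calA Kf x p \<pi>"
      by (auto simp: welfare_max_optimal_def)
    then interpret binary_auction N calA r Kf x p
      using assms by unfold_locales auto
    show "e \<le> (r - 1) / (2 * r - 1)" unfolding e by (rule ELR_le) fact
  qed
qed

end
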